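(* Let $\mathcal C\subset\mathbb R^2$ be a nonempty open bounded convex set with $0\in\mathcal C\subset B^2$, where $B^2$ is the open Euclidean unit disc, and let $A,B$ be two distinct points of the unit circle $S^1$. Then for every $R>0$, $$\mu_{\mathcal C}\big(\mathcal B_{\mathcal C}(0,R)\cap\sphericalangle(A0B)\big)\ \le\ \frac{\pi e^{8R}}{\mathrm{vol}(\mathcal B_{\mathcal C}(0,1))}\cdot\frac{\widehat{A0B}}{2},$$ where $\widehat{A0B}\in[0,\pi]$ is the angle defined by $\cos\widehat{A0B}=\langle A,B\rangle$ (Euclidean inner product).
   Context: Let $\mathcal C\subset\mathbb R^m$ be a nonempty open bounded convex set. For distinct $p,q\in\mathcal C$, let $a,b$ be the intersection points of the straight line through $p,q$ with $\partial\mathcal C$, labelled so that $p=(1-s)a+sb$ and $q=(1-t)a+tb$ with $0<s<t<1$; the Hilbert metric is $d_{\mathcal C}(p,q)=\frac12\ln\!\big(\frac{1-s}{s}\cdot\frac{t}{1-t}\big)$, and $d_{\mathcal C}(p,p)=0$. The associated Finsler norm at $p\in\mathcal C$ is $F_{\mathcal C}(p,v)=\frac12\big(\frac1{t^-}+\frac1{t^+}\big)$ for $v\neq0$, where $t^\pm>0$ are the unique numbers with $p-t^-v\in\partial\mathcal C$ and $p+t^+v\in\partial\mathcal C$, and $F_{\mathcal C}(p,0)=0$. Let $B_{\mathcal C}(p)=\{v\in\mathbb R^m : F_{\mathcal C}(p,v)<1\}$, let $\mathrm{vol}$ be Lebesgue measure on $\mathbb R^m$ and $\omega_m$ the Lebesgue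 volume of the Euclidean unit ball (so $\omega_2=\pi$). The Hilbert measure is $\mu_{\mathcal C}(A)=\int_A\frac{\omega_m}{\mathrm{vol}(B_{\mathcal C}(p))}\,d\mathrm{vol}(p)$ for Borel $A\subset\mathcal C$. When $0\in\mathcal C$ and $R>0$, $\mathcal B_{\mathcal C}(0,R)=\{p\in\mathcal C : d_{\mathcal C}(0,p)<R\}$ denotes the open metric ball; $\mathrm{vol}(\mathcal B_{\mathcal C}(0,1))$ is its Lebesgue area. For distinct points $a,b,c\in\mathbb R^2$, $\sphericalangle(bac)$ denotes the sector defined as the convex hull of the union of the half-lines $a+\mathbb R_{+}(b-a)$ and $a+\mathbb R_{+}(c-a)$. The proof may use the known fact (Colbois–Vernicos) that for any such $\mathcal C\subset\mathbb R^m$ with $0\in\mathcal C$, $\mathrm{vol}(\mathcal B_{\mathcal C}(0,R))\le e^{8R}\,\mathrm{vol}(B_{\mathcal C}(p))$ for all $R>0$ and $p\in\mathcal B_{\mathcal C}(0,R)$. *)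

theory Defs
  imports "HOL-Analysis.Analysis"
begin

definition hilbert_dist :: "'a::euclidean_space set \<Rightarrow> 'a \<Rightarrow> 'a \<Rightarrow> real" where
  "hilbert_dist C p q =
     (if p = q then 0 else
      (THE d. \<exists>a b s t. a \<in> frontier C \<and> b \<in> frontier C \<and>
          0 < s \<and> s < t \<and> t < 1 \<and>
          p = (1 - s) *\<^sub>R a + s *\<^sub>R b \<and> q = (1 - t) *\<^sub>R a + t *\<^sub>R b \<and>
          d = (1/2) * ln (((1 - s) / s) * (t / (1 - t)))))"

definition finsler_norm :: "'a::euclidean_space set \<Rightarrow> 'a \<Rightarrow> 'a \<Rightarrow> real" where
  "finsler_norm C p v =
     (if v = 0 then 0 else
      (let tm = (THE t. t > 0 \<and> p - t *\<^sub>R v \<in> frontier C);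
           tp = (THE t. t > 0 \<and> p + t *\<^sub>R v \<in> frontier C)
       in (1/2) * (1 / tm + 1 / tp)))"

definition finsler_ball :: "'a::euclidean_space set \<Rightarrow> 'a \<Rightarrow> 'a set" where
  "finsler_ball C p = {v. finsler_norm C p v < 1}"

definition omega_vol :: "'a::euclidean_space itself \<Rightarrow> real" where
  "omega_vol _ = measure lebesgue (ball (0::'a) 1)"

definition hilbert_measure :: "'a::euclidean_space set \<Rightarrow> 'a set \<Rightarrow> ennreal" where
  "hilbert_measure C A =
     (\<integral>\<^sup>+ p\<in>A. ennreal (omega_vol TYPE('a) / measure lebesgue (finsler_ball C p)) \<partial>lebesgue)"

definition hilbert_ball :: "'a::euclidean_space set \<Rightarrow> 'a \<Rightarrow> real \<Rightarrow> 'a set" where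
  "hilbert_ball C x R = {p \<in> C. hilbert_dist C x p < R}"

definition sector :: "'a::real_vector \<Rightarrow> 'a \<Rightarrow> 'a \<Rightarrow> 'a set" where
  "sector a b c = convex hull ({a + t *\<^sub>R (b - a) | t. t \<ge> 0} \<union> {a + t *\<^sub>R (c - a) | t. t \<ge> 0})"

end

theory Submission
  imports Defs
begin

(* Everything is expressed through the ray gauge g_D(x,v) = 1/t, where x + t v is the exit
   point of the ray from x in direction v.  It is positively homogeneous and convex in v,
   the Finsler norm is (g(x,-v) + g(x,v))/2, and d_C(0,q) = 1/2 ln((1+g(0,-q))/(1-g(0,q))).
   From these formulas:
   (1) B_C(0,1) is contained in ((e^2-1)/2) * B_C(0) (Finsler unit ball at the centre), and
       B_C(p) contains (1 - g(0,p)) * B_C(0), so the Busemann density omega/vol(B_C(p)) is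
       at most pi e^(4R)/vol(B_C(0)) on B_C(0,R) (a Colbois--Vernicos type estimate);
   (2) B_C(0,R) lies in the Euclidean disc of radius 1 - e^(-2R);
   (3) the part of that disc inside the sector is covered by two triangles, built on the
       bisector of A and B, of total area at most sqrt 2 rho^2 * angle(A0B)/2.
   A final numerical comparison (e^2 < 7.4) combines (1)-(3). *)

definition ray_gauge :: "'a::euclidean_space set \<Rightarrow> 'a \<Rightarrow> 'a \<Rightarrow> real" where
  "ray_gauge D x v = (if v = 0 then 0 else 1 / (THE t. t > 0 \<and> x + t *\<^sub>R v \<in> frontier D))"

lemma ray_exit_point:
  fixes D :: "'a::euclidean_space set"
  assumes "open D" "bounded D" "convex D" "x \<in> D" "v \<noteq> 0"
  obtains T where "T > 0" "x + T *\<^sub>R v \<in> frontier D"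
    "\<And>t. t > 0 \<Longrightarrow> x + t *\<^sub>R v \<in> D \<longleftrightarrow> t < T"
    "\<And>t. t > 0 \<Longrightarrow> x + t *\<^sub>R v \<in> frontier D \<Longrightarrow> t = T"
proof -
  have intD: "interior D = D" using assms(1) by (simp add: interior_open)
  obtain d where d: "0 < d" "x + d *\<^sub>R v \<in> frontier D"
    "\<And>e. \<lbrakk>0 \<le> e; e < d\<rbrakk> \<Longrightarrow> x + e *\<^sub>R v \<in> interior D"
    using ray_to_frontier[OF assms(2), of x v] assms intD by auto
  have dnot: "x + d *\<^sub>R v \<notin> D" using d(2) intD by (simp add: frontier_def)
  have far: "x + t *\<^sub>R v \<notin> closure D" if "t > d" for t
  proof
    assume cl: "x + t *\<^sub>R v \<in> closure D"
    have sub: "open_segment x (x + t *\<^sub>R v) \<subseteq> interior D"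
      by (rule in_interior_closure_convex_segment) (use assms intD cl in auto)
    have "x + d *\<^sub>R v \<in> open_segment x (x + t *\<^sub>R v)"
    proof -
      have "x + d *\<^sub>R v = (1 - d/t) *\<^sub>R x + (d/t) *\<^sub>R (x + t *\<^sub>R v)"
        using that d(1) by (simp add: algebra_simps)
      moreover have "x \<noteq> x + t *\<^sub>R v" using that d(1) assms(5) by auto
      ultimately show ?thesis using that d(1) unfolding in_segment
        by (intro conjI exI[of _ "d/t"]) (auto simp: field_simps)
    qed
    then show False using sub intD dnot by auto
  qed
  show ?thesis
  proof (rule that[OF d(1) d(2)])
    fix t :: real assume "t > 0"
    show "x + t *\<^sub>R v \<in> D \<longleftrightarrow> t < d"
      using d(3)[of t] intD far[of t] dnot closure_subset \<open>t > 0\<close>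
      by (cases "t < d"; cases "t = d") auto
  next
    fix t :: real assume "t > 0" "x + t *\<^sub>R v \<in> frontier D"
    then show "t = d"
      using d(3)[of t] intD far[of t]
      by (cases "t < d"; cases "t = d") (auto simp: frontier_def)
  qed
qed

locale convex_domain =
  fixes D :: "'a::euclidean_space set"
  assumes opn: "open D" and bnd: "bounded D" and cvx: "convex D"
begin

lemma ray_gauge_eqI:
  assumes "x \<in> D" "v \<noteq> 0" "T > 0" "x + T *\<^sub>R v \<in> frontier D"
  shows "ray_gauge D x v = 1 / T"
proof -
  obtain T' where T': "T' > 0" "x + T' *\<^sub>R v \<in> frontier D"
    "\<And>t. t > 0 \<Longrightarrow> x + t *\<^sub>R v \<in> D \<longleftrightarrow> t < T'"
    "\<And>t. t > 0 \<Longrightarrow> x + t *\<^sub>R v \<in> frontier D \<Longrightarrow> t = T'"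
    by (rule ray_exit_point[OF opn bnd cvx assms(1,2)]) blast
  have TT: "T = T'" using T'(4) assms(3,4) by blast
  have "(THE t. t > 0 \<and> x + t *\<^sub>R v \<in> frontier D) = T"
  proof (rule the_equality)
    show "T > 0 \<and> x + T *\<^sub>R v \<in> frontier D" using assms by blast
    fix t assume "t > 0 \<and> x + t *\<^sub>R v \<in> frontier D"
    then show "t = T" using T'(4) TT by blast
  qed
  then show ?thesis using assms by (simp add: ray_gauge_def)
qed

lemma ray_gauge_nonneg: "x \<in> D \<Longrightarrow> 0 \<le> ray_gauge D x v"
proof (cases "v = 0")
  case False
  assume x: "x \<in> D"
  obtain T where "T > 0" "x + T *\<^sub>R v \<in> frontier D"
    by (rule ray_exit_point[OF opn bnd cvx x False]) blast
  then show ?thesis using ray_gauge_eqI[OF x False] by simp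
qed (simp add: ray_gauge_def)

lemma ray_gauge_mem_iff:
  assumes x: "x \<in> D" and t: "t > 0"
  shows "x + t *\<^sub>R v \<in> D \<longleftrightarrow> t * ray_gauge D x v < 1"
proof (cases "v = 0")
  case False
  obtain T where T: "T > 0" "x + T *\<^sub>R v \<in> frontier D"
    "\<And>t. t > 0 \<Longrightarrow> x + t *\<^sub>R v \<in> D \<longleftrightarrow> t < T"
    by (rule ray_exit_point[OF opn bnd cvx x False]) blast
  have g: "ray_gauge D x v = 1 / T" using ray_gauge_eqI[OF x False T(1,2)] .
  have "t * (1 / T) < 1 \<longleftrightarrow> t < T" using T(1) by (simp add: field_simps)
  then show ?thesis using g T(3)[OF t] by simp
qed (use x in \<open>simp add: ray_gauge_def\<close>)

lemma ray_gauge_pos_frontier: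
  assumes x: "x \<in> D" and v: "v \<noteq> 0"
  shows "ray_gauge D x v > 0" "x + (1 / ray_gauge D x v) *\<^sub>R v \<in> frontier D"
proof -
  obtain T where T: "T > 0" "x + T *\<^sub>R v \<in> frontier D"
    by (rule ray_exit_point[OF opn bnd cvx x v]) blast
  show "ray_gauge D x v > 0" "x + (1 / ray_gauge D x v) *\<^sub>R v \<in> frontier D"
    using ray_gauge_eqI[OF x v T] T by auto
qed

lemma ray_gauge_less_iff:
  assumes x: "x \<in> D" and l: "l > 0"
  shows "ray_gauge D x v < l \<longleftrightarrow> x + (1 / l) *\<^sub>R v \<in> D"
proof -
  have "(1 / l) * ray_gauge D x v < 1 \<longleftrightarrow> ray_gauge D x v < l" using l by (simp add: field_simps)
  then show ?thesis using ray_gauge_mem_iff[OF x, of "1/l" v] l by simp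
qed

lemma ray_gauge_scale:
  assumes x: "x \<in> D" and c: "c \<ge> 0"
  shows "ray_gauge D x (c *\<^sub>R v) = c * ray_gauge D x v"
proof (cases "c = 0 \<or> v = 0")
  case True then show ?thesis by (auto simp: ray_gauge_def)
next
  case False
  then have c0: "c > 0" and v: "v \<noteq> 0" using c by auto
  have g: "ray_gauge D x v > 0" "x + (1 / ray_gauge D x v) *\<^sub>R v \<in> frontier D"
    using ray_gauge_pos_frontier[OF x v] by auto
  have "x + (1 / (c * ray_gauge D x v)) *\<^sub>R (c *\<^sub>R v) \<in> frontier D"
    using g c0 by simp
  then have "ray_gauge D x (c *\<^sub>R v) = 1 / (1 / (c * ray_gauge D x v))"
    by (intro ray_gauge_eqI[OF x]) (use c0 v g in auto)
  then show ?thesis by simp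
qed

lemma ray_gauge_subadditive:
  assumes x: "x \<in> D"
  shows "ray_gauge D x (v + w) \<le> ray_gauge D x v + ray_gauge D x w"
proof (rule ccontr)
  assume neg: "\<not> ray_gauge D x (v + w) \<le> ray_gauge D x v + ray_gauge D x w"
  define a where "a = ray_gauge D x v"
  define b where "b = ray_gauge D x w"
  define e where "e = (ray_gauge D x (v + w) - a - b) / 3"
  have e: "e > 0" using neg by (simp add: e_def a_def b_def)
  have a0: "a \<ge> 0" "b \<ge> 0" using ray_gauge_nonneg[OF x] by (auto simp: a_def b_def)
  have p1: "x + (1 / (a + e)) *\<^sub>R v \<in> D" using ray_gauge_less_iff[OF x, of "a+e" v] e a0 by (simp add: a_def)
  have p2: "x + (1 / (b + e)) *\<^sub>R w \<in> D" using ray_gauge_less_iff[OF x, of "b+e" w] e a0 by (simp add: b_def)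
  have pos: "a + b + 2 * e > 0" "a + e > 0" "b + e > 0" using e a0 by auto
  define u where "u = (a + e) / (a + b + 2 * e)"
  have u0: "0 \<le> u" unfolding u_def using pos by simp
  have u1: "u \<le> 1" unfolding u_def using pos a0 by (simp add: divide_le_eq)
  note u = u0 u1
  have "(1 - u) *\<^sub>R (x + (1 / (b + e)) *\<^sub>R w) + u *\<^sub>R (x + (1 / (a + e)) *\<^sub>R v) \<in> D"
    by (rule convexD_alt[OF cvx p2 p1 u])
  moreover have "(1 - u) *\<^sub>R (x + (1 / (b + e)) *\<^sub>R w) + u *\<^sub>R (x + (1 / (a + e)) *\<^sub>R v)
      = x + (1 / (a + b + 2 * e)) *\<^sub>R (v + w)"
  proof -
    have u1': "1 - u = (b + e) / (a + b + 2 * e)" using pos(1) by (simp add: u_def field_simps)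
    have s1: "(1 - u) / (b + e) = 1 / (a + b + 2 * e)" using pos(3) by (simp add: u1')
    have s2: "u / (a + e) = 1 / (a + b + 2 * e)" using pos(2) by (simp add: u_def)
    have "(1 - u) *\<^sub>R (x + (1 / (b + e)) *\<^sub>R w) + u *\<^sub>R (x + (1 / (a + e)) *\<^sub>R v)
       = ((1 - u) + u) *\<^sub>R x + ((1 - u) / (b + e)) *\<^sub>R w + (u / (a + e)) *\<^sub>R v"
      by (simp add: scaleR_add_right scaleR_add_left)
    also have "\<dots> = x + (1 / (a + b + 2 * e)) *\<^sub>R (v + w)"
      unfolding s1 s2 by (simp add: scaleR_add_right)
    finally show ?thesis .
  qed
  ultimately have "ray_gauge D x (v + w) < a + b + 2 * e"
    using ray_gauge_less_iff[OF x, of "a + b + 2*e" "v + w"] e a0 by simp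
  moreover have "ray_gauge D x (v + w) = a + b + 3 * e" unfolding e_def by (simp add: field_simps)
  ultimately show False using e by linarith
qed

lemma ray_gauge_convex_comb:
  assumes x: "x \<in> D" and "0 \<le> u" "0 \<le> w" "u + w = 1"
  shows "ray_gauge D x (u *\<^sub>R p + w *\<^sub>R q) \<le> u * ray_gauge D x p + w * ray_gauge D x q"
proof -
  have "ray_gauge D x (u *\<^sub>R p + w *\<^sub>R q) \<le> ray_gauge D x (u *\<^sub>R p) + ray_gauge D x (w *\<^sub>R q)"
    by (rule ray_gauge_subadditive[OF x])
  also have "\<dots> = u * ray_gauge D x p + w * ray_gauge D x q"
    using ray_gauge_scale[OF x, of u p] ray_gauge_scale[OF x, of w q] assms by simp
  finally show ?thesis .
qed

lemma finsler_norm_gauge: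
  "finsler_norm D p v = (1/2) * (ray_gauge D p (-v) + ray_gauge D p v)"
  by (simp add: finsler_norm_def ray_gauge_def Let_def)

lemma finsler_ball_gauge: "finsler_ball D p = {v. ray_gauge D p (-v) + ray_gauge D p v < 2}"
  by (auto simp: finsler_ball_def finsler_norm_gauge)

text \<open>Sublevel sets of a nonnegative combination of the gauges in the directions \<open>-v\<close> and \<open>v\<close>
  are convex; both Finsler balls and Hilbert balls are of this form.\<close>
lemma convex_gauge_sublevel:
  assumes x: "x \<in> D" and l: "l \<ge> 0"
  shows "convex {v. ray_gauge D x (-v) + l * ray_gauge D x v < \<mu>}"
  unfolding convex_def
proof (intro ballI allI impI)
  fix p q :: 'a and u w :: real
  assume p: "p \<in> {v. ray_gauge D x (-v) + l * ray_gauge D x v < \<mu>}"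
    and q: "q \<in> {v. ray_gauge D x (-v) + l * ray_gauge D x v < \<mu>}"
    and u: "0 \<le> u" and w: "0 \<le> w" and uw: "u + w = 1"
  have "ray_gauge D x (u *\<^sub>R p + w *\<^sub>R q) \<le> u * ray_gauge D x p + w * ray_gauge D x q"
    by (rule ray_gauge_convex_comb[OF x u w uw])
  then have a: "l * ray_gauge D x (u *\<^sub>R p + w *\<^sub>R q) \<le> l * (u * ray_gauge D x p + w * ray_gauge D x q)"
    using l by (rule mult_left_mono)
  have b: "ray_gauge D x (-(u *\<^sub>R p + w *\<^sub>R q)) \<le> u * ray_gauge D x (-p) + w * ray_gauge D x (-q)"
    using ray_gauge_convex_comb[OF x u w uw, of "-p" "-q"] by (simp add: algebra_simps)
  have "u * (ray_gauge D x (-p) + l * ray_gauge D x p) + w * (ray_gauge D x (-q) + l * ray_gauge D x q) < \<mu>"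
    by (rule convex_bound_lt) (use p q u w uw in auto)
  then show "u *\<^sub>R p + w *\<^sub>R q \<in> {v. ray_gauge D x (-v) + l * ray_gauge D x v < \<mu>}"
    using a b by (simp add: algebra_simps)
qed

lemma convex_finsler_ball: "p \<in> D \<Longrightarrow> convex (finsler_ball D p)"
  using convex_gauge_sublevel[of p 1 2] by (simp add: finsler_ball_gauge)

text \<open>Any boundary chord through \<open>0\<close> and \<open>q\<close>, parametrised as in the definition of the Hilbert
  metric, has endpoints \<open>-q/g(0,-q)\<close> and \<open>q/g(0,q)\<close>; so its cross ratio is determined by
  the gauges.\<close>
lemma chord_cross_ratio:
  assumes z: "0 \<in> D" and q: "q \<noteq> 0"
    and ab: "a \<in> frontier D" "b \<in> frontier D" and st: "0 < s" "s < t" "t < 1"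
    and h0: "0 = (1 - s) *\<^sub>R a + s *\<^sub>R b" and hq: "q = (1 - t) *\<^sub>R a + t *\<^sub>R b"
  shows "((1 - s) / s) * (t / (1 - t)) = (1 + ray_gauge D 0 (-q)) / (1 - ray_gauge D 0 q)"
proof -
  have "q = ((1 - t) *\<^sub>R a + t *\<^sub>R b) - ((1 - s) *\<^sub>R a + s *\<^sub>R b)" using h0 hq by simp
  also have "\<dots> = (t - s) *\<^sub>R (b - a)" by (simp add: algebra_simps)
  finally have bma: "b - a = (1 / (t - s)) *\<^sub>R q" using st by simp
  have "0 = a + s *\<^sub>R (b - a)" using h0 by (simp add: algebra_simps)
  then have ha: "a = (s / (t - s)) *\<^sub>R (-q)" using bma by (simp add: eq_neg_iff_add_eq_0 add.commute)
  have hb: "b = ((1 - s) / (t - s)) *\<^sub>R q"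
  proof -
    have "b = a + (b - a)" by simp
    also have "\<dots> = (1 / (t - s) - s / (t - s)) *\<^sub>R q" using ha bma
      by (simp add: scaleR_left_diff_distrib)
    also have "1 / (t - s) - s / (t - s) = (1 - s) / (t - s)" by (simp add: diff_divide_distrib)
    finally show ?thesis .
  qed
  have tau: "ray_gauge D 0 (-q) = 1 / (s / (t - s))"
    by (rule ray_gauge_eqI[OF z]) (use q st ab(1) ha in auto)
  have sig: "ray_gauge D 0 q = 1 / ((1 - s) / (t - s))"
    by (rule ray_gauge_eqI[OF z]) (use q st ab(2) hb in auto)
  show ?thesis using st unfolding tau sig by (simp add: field_simps)
qed

text \<open>The Hilbert distance from an interior point \<open>0\<close>: the chord through \<open>0\<close> and \<open>q\<close> exists
  (its endpoints are the exit points of the two rays), and its cross ratio is given above.\<close>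
lemma hilbert_dist_origin:
  assumes z: "0 \<in> D" and q: "q \<in> D"
  shows "hilbert_dist D 0 q = (1/2) * ln ((1 + ray_gauge D 0 (-q)) / (1 - ray_gauge D 0 q))"
proof (cases "q = 0")
  case True
  then show ?thesis by (simp add: hilbert_dist_def ray_gauge_def)
next
  case False
  define \<sigma> where "\<sigma> = ray_gauge D 0 q"
  define \<tau> where "\<tau> = ray_gauge D 0 (-q)"
  have sp: "\<sigma> > 0" and fb: "0 + (1/\<sigma>) *\<^sub>R q \<in> frontier D"
    using ray_gauge_pos_frontier[OF z False] by (auto simp: \<sigma>_def)
  have tp: "\<tau> > 0" and fa: "0 + (1/\<tau>) *\<^sub>R (-q) \<in> frontier D"
    using ray_gauge_pos_frontier[OF z, of "-q"] False by (auto simp: \<tau>_def)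
  have s1: "\<sigma> < 1" using ray_gauge_less_iff[OF z, of 1 q] q by (simp add: \<sigma>_def)
  define s where "s = \<sigma> / (\<sigma> + \<tau>)"
  define t where "t = \<sigma> * (\<tau> + 1) / (\<sigma> + \<tau>)"
  define a where "a = (1/\<tau>) *\<^sub>R (-q)"
  define b where "b = (1/\<sigma>) *\<^sub>R q"
  have nz: "\<sigma> + \<tau> > 0" using sp tp by simp
  have "\<sigma> * \<tau> < 1 * \<tau>" by (rule mult_strict_right_mono) (use s1 tp in auto)
  then have "\<sigma> * (\<tau> + 1) < \<sigma> + \<tau>" by (simp add: algebra_simps)
  moreover have "\<sigma> < \<sigma> * (\<tau> + 1)" using sp tp by (simp add: algebra_simps)
  ultimately have st: "0 < s" "s < t" "t < 1"
    using sp nz by (simp_all add: s_def t_def divide_strict_right_mono)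
  have ms: "1 - s = \<tau> / (\<sigma> + \<tau>)" using nz by (simp add: s_def field_simps)
  have mt: "1 - t = \<tau> * (1 - \<sigma>) / (\<sigma> + \<tau>)" using nz by (simp add: t_def field_simps)
  have "(1 - s) *\<^sub>R a + s *\<^sub>R b = (s / \<sigma> - (1 - s) / \<tau>) *\<^sub>R q"
    by (simp add: a_def b_def algebra_simps)
  moreover have "s / \<sigma> - (1 - s) / \<tau> = 0" using sp tp unfolding ms by (simp add: s_def)
  ultimately have h0: "0 = (1 - s) *\<^sub>R a + s *\<^sub>R b" by simp
  have "(1 - t) *\<^sub>R a + t *\<^sub>R b = (t / \<sigma> - (1 - t) / \<tau>) *\<^sub>R q"
    by (simp add: a_def b_def algebra_simps)
  moreover have "t / \<sigma> - (1 - t) / \<tau> = 1"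
  proof -
    have "t / \<sigma> = (\<tau> + 1) / (\<sigma> + \<tau>)" using sp by (simp add: t_def)
    moreover have "(1 - t) / \<tau> = (1 - \<sigma>) / (\<sigma> + \<tau>)" using tp unfolding mt by simp
    ultimately show ?thesis using nz by (simp add: diff_divide_distrib[symmetric])
  qed
  ultimately have hq: "q = (1 - t) *\<^sub>R a + t *\<^sub>R b" by simp
  have "(THE d. \<exists>a b s t. a \<in> frontier D \<and> b \<in> frontier D \<and> 0 < s \<and> s < t \<and> t < 1 \<and>
          0 = (1 - s) *\<^sub>R a + s *\<^sub>R b \<and> q = (1 - t) *\<^sub>R a + t *\<^sub>R b \<and>
          d = (1/2) * ln (((1 - s) / s) * (t / (1 - t))))
      = (1/2) * ln ((1 + \<tau>) / (1 - \<sigma>))"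
  proof (rule the_equality)
    show "\<exists>a b s t. a \<in> frontier D \<and> b \<in> frontier D \<and> 0 < s \<and> s < t \<and> t < 1 \<and>
          0 = (1 - s) *\<^sub>R a + s *\<^sub>R b \<and> q = (1 - t) *\<^sub>R a + t *\<^sub>R b \<and>
          (1/2) * ln ((1 + \<tau>) / (1 - \<sigma>)) = (1/2) * ln (((1 - s) / s) * (t / (1 - t)))"
    proof (intro exI conjI)
      show "a \<in> frontier D" "b \<in> frontier D" using fa fb by (simp_all add: a_def b_def)
      then have "((1 - s) / s) * (t / (1 - t)) = (1 + \<tau>) / (1 - \<sigma>)"
        unfolding \<sigma>_def \<tau>_def by (rule chord_cross_ratio[OF z False _ _ st h0 hq])
      then show "(1/2) * ln ((1 + \<tau>) / (1 - \<sigma>)) = (1/2) * ln (((1 - s) / s) * (t / (1 - t)))"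
        by simp
    qed (use st h0 hq in auto)
  next
    fix d assume "\<exists>a b s t. a \<in> frontier D \<and> b \<in> frontier D \<and> 0 < s \<and> s < t \<and> t < 1 \<and>
          0 = (1 - s) *\<^sub>R a + s *\<^sub>R b \<and> q = (1 - t) *\<^sub>R a + t *\<^sub>R b \<and>
          d = (1/2) * ln (((1 - s) / s) * (t / (1 - t)))"
    then obtain a' b' s' t' where chord: "a' \<in> frontier D" "b' \<in> frontier D" "0 < s'" "s' < t'" "t' < 1"
        "0 = (1 - s') *\<^sub>R a' + s' *\<^sub>R b'" "q = (1 - t') *\<^sub>R a' + t' *\<^sub>R b'"
      and d: "d = (1/2) * ln (((1 - s') / s') * (t' / (1 - t')))"
      by blast
    show "d = (1/2) * ln ((1 + \<tau>) / (1 - \<sigma>))"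
      unfolding d \<sigma>_def \<tau>_def chord_cross_ratio[OF z False chord] ..
  qed
  then show ?thesis using False by (simp add: hilbert_dist_def \<sigma>_def \<tau>_def)
qed

end

lemma measure_scaled: "measure lebesgue ((\<lambda>x. c *\<^sub>R x) ` S) = \<bar>c\<bar> ^ DIM('a) * measure lebesgue (S :: 'a::euclidean_space set)"
  using measure_lebesgue_affine[of c 0 S] by simp

lemma hilbert_measure_le_uniform:
  fixes C X T :: "'a::euclidean_space set"
  assumes T: "T \<in> lmeasurable" and XT: "X \<subseteq> T" and K: "K \<ge> 0"
    and dens: "\<And>p. p \<in> X \<Longrightarrow> omega_vol TYPE('a) / measure lebesgue (finsler_ball C p) \<le> K"
  shows "hilbert_measure C X \<le> ennreal (K * measure lebesgue T)"
proof -
  have "hilbert_measure C X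
      = (\<integral>\<^sup>+ p. ennreal (omega_vol TYPE('a) / measure lebesgue (finsler_ball C p)) * indicator X p \<partial>lebesgue)"
    by (simp add: hilbert_measure_def)
  also have "\<dots> \<le> (\<integral>\<^sup>+ p. ennreal K * indicator T p \<partial>lebesgue)"
  proof (rule nn_integral_mono)
    fix p
    show "ennreal (omega_vol TYPE('a) / measure lebesgue (finsler_ball C p)) * indicator X p
        \<le> ennreal K * indicator T p"
    proof (cases "p \<in> X")
      case True
      then have "p \<in> T" using XT by blast
      then show ?thesis using True dens[OF True] by (simp add: ennreal_leI)
    qed simp
  qed
  also have "\<dots> = ennreal K * emeasure lebesgue T"
    using T by (simp add: nn_integral_cmult_indicator)
  also have "\<dots> = ennreal (K * measure lebesgue T)"
    using T K by (simp add: emeasure_eq_measure2 ennreal_mult)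
  finally show ?thesis .
qed

locale centered_domain = convex_domain +
  assumes z: "0 \<in> D" and sub: "D \<subseteq> ball 0 1"
begin

lemma mem_iff_gauge: "q \<in> D \<longleftrightarrow> ray_gauge D 0 q < 1"
  using ray_gauge_less_iff[OF z, of 1 q] by simp

lemma hilbert_ball_gauge:
  "hilbert_ball D 0 r = {q. ray_gauge D 0 (-q) + exp (2 * r) * ray_gauge D 0 q < exp (2 * r) - 1}"
proof (intro set_eqI iffI)
  fix q assume "q \<in> hilbert_ball D 0 r"
  then have q: "q \<in> D" and d: "hilbert_dist D 0 q < r" by (auto simp: hilbert_ball_def)
  have s1: "ray_gauge D 0 q < 1" using q mem_iff_gauge by simp
  have t0: "ray_gauge D 0 (-q) \<ge> 0" by (rule ray_gauge_nonneg[OF z])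
  define X where "X = (1 + ray_gauge D 0 (-q)) / (1 - ray_gauge D 0 q)"
  have Xp: "X > 0" using s1 t0 by (simp add: X_def)
  have "ln X < 2 * r" using d hilbert_dist_origin[OF z q] by (simp add: X_def)
  then have "X < exp (2 * r)" using Xp by (metis exp_less_cancel_iff exp_ln)
  then have "1 + ray_gauge D 0 (-q) < exp (2 * r) * (1 - ray_gauge D 0 q)"
    using s1 by (simp add: X_def pos_divide_less_eq)
  then show "q \<in> {q. ray_gauge D 0 (-q) + exp (2 * r) * ray_gauge D 0 q < exp (2 * r) - 1}"
    by (simp add: algebra_simps)
next
  fix q assume "q \<in> {q. ray_gauge D 0 (-q) + exp (2 * r) * ray_gauge D 0 q < exp (2 * r) - 1}"
  then have h: "ray_gauge D 0 (-q) + exp (2 * r) * ray_gauge D 0 q < exp (2 * r) - 1" by simp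
  have t0: "ray_gauge D 0 (-q) \<ge> 0" by (rule ray_gauge_nonneg[OF z])
  have E1: "exp (2 * r) * ray_gauge D 0 q < exp (2 * r) * 1" using h t0 by linarith
  then have s1: "ray_gauge D 0 q < 1" by (simp only: mult_less_cancel_left_pos[OF exp_gt_zero])
  then have q: "q \<in> D" using mem_iff_gauge by simp
  have h2: "1 + ray_gauge D 0 (-q) < exp (2 * r) * (1 - ray_gauge D 0 q)"
    using h by (simp add: algebra_simps)
  define X where "X = (1 + ray_gauge D 0 (-q)) / (1 - ray_gauge D 0 q)"
  have Xp: "X > 0" using s1 t0 by (simp add: X_def)
  have "X < exp (2 * r)" using h2 s1 by (simp add: X_def pos_divide_less_eq)
  then have "ln X < 2 * r" using Xp by (metis ln_less_cancel_iff exp_gt_zero ln_exp)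
  then have "hilbert_dist D 0 q < r" using hilbert_dist_origin[OF z q] by (simp add: X_def)
  then show "q \<in> hilbert_ball D 0 r" using q by (simp add: hilbert_ball_def)
qed

text \<open>Since \<open>D\<close> lies in the unit ball, gauges dominate Euclidean lengths; since \<open>0\<close> is
  interior, the gauge at \<open>0\<close> is dominated by a multiple of the length.\<close>
lemma norm_le_gauge_origin: "norm v \<le> ray_gauge D 0 v"
proof (rule ccontr)
  assume "\<not> ?thesis"
  then have lt: "ray_gauge D 0 v < norm v" by simp
  then have v: "v \<noteq> 0" using ray_gauge_nonneg[OF z, of v] by auto
  have "0 + (1 / norm v) *\<^sub>R v \<in> D" using ray_gauge_less_iff[OF z, of "norm v" v] lt v by simp
  then show False using sub v by auto
qed

lemma norm_le_twice_gauge: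
  assumes p: "p \<in> D" shows "norm v \<le> 2 * ray_gauge D p v"
proof (rule ccontr)
  assume "\<not> ?thesis"
  then have lt: "ray_gauge D p v < norm v / 2" by simp
  then have v: "v \<noteq> 0" using ray_gauge_nonneg[OF p, of v] by auto
  have "p + (1 / (norm v / 2)) *\<^sub>R v \<in> D" using ray_gauge_less_iff[OF p, of "norm v / 2" v] lt v by simp
  then have n1: "norm (p + (2 / norm v) *\<^sub>R v) < 1" using sub by auto
  have n2: "norm p < 1" using p sub by auto
  have "norm ((2 / norm v) *\<^sub>R v) = 2" using v by simp
  moreover have "norm ((2 / norm v) *\<^sub>R v) \<le> norm (p + (2 / norm v) *\<^sub>R v) + norm p"
    by (metis add.commute add_diff_cancel_left' norm_triangle_ineq4)
  ultimately show False using n1 n2 by linarith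
qed

lemma gauge_origin_upper: obtains r where "r > 0" "\<And>v. ray_gauge D 0 v \<le> norm v / r"
proof -
  obtain r where r: "r > 0" "ball 0 r \<subseteq> D" using opn z open_contains_ball by blast
  have "ray_gauge D 0 v \<le> norm v / r" for v
  proof (rule dense_ge)
    fix l assume l: "norm v / r < l"
    have lp: "l > 0" using l r(1) by (smt (verit) divide_nonneg_pos norm_ge_zero)
    have "norm v < l * r" using l r(1) by (simp add: divide_less_eq)
    then have "norm ((1 / l) *\<^sub>R v) < r" using lp by (simp add: divide_less_eq mult.commute)
    then have "0 + (1 / l) *\<^sub>R v \<in> D" using r(2) by auto
    then show "ray_gauge D 0 v \<le> l" using ray_gauge_less_iff[OF z lp, of v] by simp
  qed
  then show ?thesis using that r(1) by blast
qed

text \<open>Comparison of gauges at \<open>p\<close> and at \<open>0\<close>: \<open>D\<close> contains the convex hull of \<open>p/\<sigma>\<close>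
  (\<open>\<sigma> = g(0,p)\<close>) and the segment of the ray from \<open>0\<close>, so the ray from \<open>p\<close> runs at least
  \<open>(1 - \<sigma>)\<close> times as far.\<close>
lemma gauge_shift:
  assumes p: "p \<in> D"
  shows "ray_gauge D p v * (1 - ray_gauge D 0 p) \<le> ray_gauge D 0 v"
proof (rule ccontr)
  assume "\<not> ?thesis"
  then have lt: "ray_gauge D 0 v < ray_gauge D p v * (1 - ray_gauge D 0 p)" by simp
  define \<sigma> where "\<sigma> = ray_gauge D 0 p"
  define G where "G = ray_gauge D 0 v"
  define Gp where "Gp = ray_gauge D p v"
  have s1: "\<sigma> < 1" using p mem_iff_gauge by (simp add: \<sigma>_def)
  have s0: "\<sigma> \<ge> 0" using ray_gauge_nonneg[OF z] by (simp add: \<sigma>_def)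
  have G0: "G \<ge> 0" using ray_gauge_nonneg[OF z] by (simp add: G_def)
  have Gp0: "Gp > 0" using lt G0 s1 unfolding G_def Gp_def \<sigma>_def
    by (smt (verit, best) mult_nonpos_nonneg ray_gauge_nonneg[OF p])
  define t where "t = 1 / Gp"
  have tp: "t > 0" using Gp0 by (simp add: t_def)
  have notin: "p + t *\<^sub>R v \<notin> D" using ray_gauge_mem_iff[OF p tp, of v] Gp0 by (simp add: t_def Gp_def)
  have tG: "t * G < 1 - \<sigma>" using lt Gp0 by (simp add: t_def G_def Gp_def \<sigma>_def divide_less_eq mult.commute)
  define e where "e = (1 - \<sigma> - t * G) / 2"
  have e: "e > 0" using tG by (simp add: e_def)
  define \<sigma>' where "\<sigma>' = \<sigma> + e"
  have s': "\<sigma> < \<sigma>'" "\<sigma>' < 1" "t * G < 1 - \<sigma>'" using e tG s0 mult_nonneg_nonneg[OF less_imp_le[OF tp] G0] unfolding \<sigma>'_def e_def by (simp_all add: field_simps)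
  have s'p: "\<sigma>' > 0" using s' s0 by simp
  have p1: "0 + (1 / \<sigma>') *\<^sub>R p \<in> D" using ray_gauge_less_iff[OF z s'p, of p] s' by (simp add: \<sigma>_def)
  have lp: "(1 - \<sigma>') / t > 0" using s' tp by simp
  have "G < (1 - \<sigma>') / t" using s'(3) tp by (simp add: pos_less_divide_eq mult.commute)
  then have p2: "0 + (1 / ((1 - \<sigma>') / t)) *\<^sub>R v \<in> D" using ray_gauge_less_iff[OF z lp, of v] by (simp add: G_def)
  have "(1 - \<sigma>') *\<^sub>R ((t / (1 - \<sigma>')) *\<^sub>R v) + \<sigma>' *\<^sub>R ((1 / \<sigma>') *\<^sub>R p) \<in> D"
    by (rule convexD_alt[OF cvx]) (use p1 p2 s' s'p in auto)
  moreover have "(1 - \<sigma>') *\<^sub>R ((t / (1 - \<sigma>')) *\<^sub>R v) + \<sigma>' *\<^sub>R ((1 / \<sigma>') *\<^sub>R p) = p + t *\<^sub>R v"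
    using s' s'p by (simp add: add.commute)
  ultimately show False using notin by simp
qed

lemma bounded_finsler_ball: assumes p: "p \<in> D" shows "bounded (finsler_ball D p)"
proof -
  have "finsler_ball D p \<subseteq> cball 0 4"
  proof
    fix v assume "v \<in> finsler_ball D p"
    then have "ray_gauge D p (-v) + ray_gauge D p v < 2" by (simp add: finsler_ball_gauge)
    moreover have "ray_gauge D p (-v) \<ge> 0" by (rule ray_gauge_nonneg[OF p])
    moreover have "norm v \<le> 2 * ray_gauge D p v" by (rule norm_le_twice_gauge[OF p])
    ultimately show "v \<in> cball 0 4" by simp
  qed
  then show ?thesis using bounded_cball bounded_subset by blast
qed

lemma convex_hilbert_ball: "convex (hilbert_ball D 0 r)"
  using convex_gauge_sublevel[OF z, of "exp (2 * r)" "exp (2 * r) - 1"] by (simp add: hilbert_ball_gauge)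

lemma hilbert_ball_subset: "hilbert_ball D 0 r \<subseteq> D"
  by (auto simp: hilbert_ball_def)

lemma bounded_hilbert_ball: "bounded (hilbert_ball D 0 r)"
  using hilbert_ball_subset bnd bounded_subset by blast

lemma finsler_ball_lmeasurable: "p \<in> D \<Longrightarrow> finsler_ball D p \<in> lmeasurable"
  by (intro measurable_convex convex_finsler_ball bounded_finsler_ball)

lemma hilbert_ball_lmeasurable: "hilbert_ball D 0 r \<in> lmeasurable"
  by (intro measurable_convex convex_hilbert_ball bounded_hilbert_ball)

lemma scaled_finsler_ball_lmeasurable: "p \<in> D \<Longrightarrow> (\<lambda>x. c *\<^sub>R x) ` finsler_ball D p \<in> lmeasurable"
  by (intro measurable_convex convex_scaling bounded_scaling convex_finsler_ball bounded_finsler_ball)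

lemma hilbert_unit_ball_subset:
  defines "k \<equiv> (exp 2 - 1) / 2"
  shows "hilbert_ball D 0 1 \<subseteq> (\<lambda>x. k *\<^sub>R x) ` finsler_ball D 0"
proof
  fix q assume "q \<in> hilbert_ball D 0 1"
  then have h: "ray_gauge D 0 (-q) + exp 2 * ray_gauge D 0 q < exp 2 - 1" by (simp add: hilbert_ball_gauge)
  have e2: "exp (2::real) \<ge> 1" by simp
  have kp: "k > 0" unfolding k_def using exp_gt_one[of 2] by simp
  have g0: "ray_gauge D 0 q \<ge> 0" by (rule ray_gauge_nonneg[OF z])
  have "ray_gauge D 0 q \<le> exp 2 * ray_gauge D 0 q" using e2 g0 by (simp add: mult_le_cancel_right1)
  then have s: "ray_gauge D 0 (-q) + ray_gauge D 0 q < 2 * k" using h by (simp add: k_def)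
  define w where "w = (1 / k) *\<^sub>R q"
  have "ray_gauge D 0 (-w) = (1/k) * ray_gauge D 0 (-q)"
    using ray_gauge_scale[OF z, of "1/k" "-q"] kp by (simp add: w_def)
  moreover have "ray_gauge D 0 w = (1/k) * ray_gauge D 0 q"
    using ray_gauge_scale[OF z, of "1/k" "q"] kp by (simp add: w_def)
  ultimately have "ray_gauge D 0 (-w) + ray_gauge D 0 w = (ray_gauge D 0 (-q) + ray_gauge D 0 q) / k"
    by (simp add: add_divide_distrib)
  also have "\<dots> < 2" using s kp by (simp add: divide_less_eq)
  finally have "w \<in> finsler_ball D 0" by (simp add: finsler_ball_gauge)
  moreover have "q = k *\<^sub>R w" using kp by (simp add: w_def)
  ultimately show "q \<in> (\<lambda>x. k *\<^sub>R x) ` finsler_ball D 0" by blast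
qed

lemma hilbert_unit_ball_measure_le:
  "measure lebesgue (hilbert_ball D 0 1) \<le> ((exp 2 - 1) / 2) ^ DIM('a) * measure lebesgue (finsler_ball D 0)"
proof -
  have kp: "(exp 2 - 1) / 2 > (0::real)" using exp_gt_one[of 2] by simp
  have "measure lebesgue (hilbert_ball D 0 1) \<le> measure lebesgue ((\<lambda>x. ((exp 2 - 1) / 2) *\<^sub>R x) ` finsler_ball D 0)"
    by (rule measure_mono_fmeasurable[OF hilbert_unit_ball_subset]) (use hilbert_ball_lmeasurable scaled_finsler_ball_lmeasurable z in auto)
  also have "\<dots> = ((exp 2 - 1) / 2) ^ DIM('a) * measure lebesgue (finsler_ball D 0)"
    using kp by (simp add: measure_scaled)
  finally show ?thesis .
qed

text \<open>The unit Hilbert ball contains a Euclidean ball about \<open>0\<close>, so has positive volume.\<close>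
lemma hilbert_unit_ball_measure_pos: "measure lebesgue (hilbert_ball D 0 1) > 0"
proof -
  obtain r where r: "r > 0" "\<And>v. ray_gauge D 0 v \<le> norm v / r" using gauge_origin_upper by blast
  have "ball 0 (r/4) \<subseteq> hilbert_ball D 0 1"
  proof
    fix q :: 'a assume "q \<in> ball 0 (r/4)"
    then have nq: "norm q < r/4" by simp
    have nq4: "norm q / r < 1/4" using nq r(1) by (simp add: divide_less_eq)
    have a: "ray_gauge D 0 q < 1/4" using r(2)[of q] nq4 by linarith
    have bb: "ray_gauge D 0 (-q) \<le> norm q / r" using r(2)[of "-q"] by simp
    have b: "ray_gauge D 0 (-q) < 1/4" using bb nq4 by linarith
    have g0: "ray_gauge D 0 q \<ge> 0" by (rule ray_gauge_nonneg[OF z])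
    have e3: "exp (2::real) \<ge> 3" using exp_ge_add_one_self[of 2] by simp
    have "exp 2 * ray_gauge D 0 q \<le> exp 2 * (1/4)" by (rule mult_left_mono) (use a in auto)
    then have "ray_gauge D 0 (-q) + exp 2 * ray_gauge D 0 q < exp 2 - 1" using b e3 by linarith
    then show "q \<in> hilbert_ball D 0 1" by (simp add: hilbert_ball_gauge)
  qed
  then have "measure lebesgue (ball (0::'a) (r/4)) \<le> measure lebesgue (hilbert_ball D 0 1)"
    by (rule measure_mono_fmeasurable) (use hilbert_ball_lmeasurable in auto)
  moreover have "measure lebesgue (ball (0::'a) (r/4)) = measure lborel (ball (0::'a) (r/4))" by simp
  moreover have "measure lborel (ball (0::'a) (r/4)) > 0"
    using r(1) content_ball_pos[of "r/4" "0::'a"] by simp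
  ultimately show ?thesis by linarith
qed

lemma finsler_ball_center_measure_pos: "measure lebesgue (finsler_ball D 0) > 0"
proof -
  have k: "((exp 2 - 1) / 2 :: real) ^ DIM('a) > 0" using exp_gt_one[of 2] by simp
  have "0 < measure lebesgue (hilbert_ball D 0 1)" by (rule hilbert_unit_ball_measure_pos)
  also have "\<dots> \<le> ((exp 2 - 1) / 2) ^ DIM('a) * measure lebesgue (finsler_ball D 0)"
    by (rule hilbert_unit_ball_measure_le)
  finally show ?thesis using k by (simp add: zero_less_mult_iff)
qed

lemma scaled_finsler_ball_subset:
  assumes p: "p \<in> D"
  shows "(\<lambda>x. (1 - ray_gauge D 0 p) *\<^sub>R x) ` finsler_ball D 0 \<subseteq> finsler_ball D p"
proof
  fix v assume "v \<in> (\<lambda>x. (1 - ray_gauge D 0 p) *\<^sub>R x) ` finsler_ball D 0"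
  then obtain w where w: "w \<in> finsler_ball D 0" and v: "v = (1 - ray_gauge D 0 p) *\<^sub>R w" by blast
  define c where "c = 1 - ray_gauge D 0 p"
  have cp: "c > 0" using p mem_iff_gauge by (simp add: c_def)
  have a: "ray_gauge D p v * c \<le> c * ray_gauge D 0 w"
    using gauge_shift[OF p, of v] ray_gauge_scale[OF z, of c w] cp by (simp add: v c_def)
  have b: "ray_gauge D p (-v) * c \<le> c * ray_gauge D 0 (-w)"
    using gauge_shift[OF p, of "-v"] ray_gauge_scale[OF z, of c "-w"] cp by (simp add: v c_def)
  have a': "ray_gauge D p v \<le> ray_gauge D 0 w" using a cp by (simp add: mult.commute)
  have b': "ray_gauge D p (-v) \<le> ray_gauge D 0 (-w)" using b cp by (simp add: mult.commute)
  have "ray_gauge D 0 (-w) + ray_gauge D 0 w < 2" using w by (simp add: finsler_ball_gauge)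
  then show "v \<in> finsler_ball D p" using a' b' by (simp add: finsler_ball_gauge)
qed

lemma finsler_ball_measure_ge:
  assumes p: "p \<in> D"
  shows "(1 - ray_gauge D 0 p) ^ DIM('a) * measure lebesgue (finsler_ball D 0) \<le> measure lebesgue (finsler_ball D p)"
proof -
  have cp: "1 - ray_gauge D 0 p > 0" using p mem_iff_gauge by simp
  have "measure lebesgue ((\<lambda>x. (1 - ray_gauge D 0 p) *\<^sub>R x) ` finsler_ball D 0) \<le> measure lebesgue (finsler_ball D p)"
    by (rule measure_mono_fmeasurable[OF scaled_finsler_ball_subset[OF p]]) (use finsler_ball_lmeasurable scaled_finsler_ball_lmeasurable z p in auto)
  then show ?thesis using cp by (simp add: measure_scaled)
qed

lemma hilbert_ball_gauge_bound:
  assumes "p \<in> hilbert_ball D 0 R"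
  shows "p \<in> D" "exp (2 * R) * (1 - ray_gauge D 0 p) > 1"
proof -
  have h: "ray_gauge D 0 (-p) + exp (2 * R) * ray_gauge D 0 p < exp (2 * R) - 1"
    using assms by (simp add: hilbert_ball_gauge)
  show "p \<in> D" using assms hilbert_ball_subset by auto
  have "ray_gauge D 0 (-p) \<ge> 0" by (rule ray_gauge_nonneg[OF z])
  then show "exp (2 * R) * (1 - ray_gauge D 0 p) > 1" using h by (simp add: algebra_simps)
qed

lemma hilbert_ball_subset_ball: "hilbert_ball D 0 R \<subseteq> ball 0 (1 - exp (- 2 * R))"
proof
  fix p assume p: "p \<in> hilbert_ball D 0 R"
  have "1 / exp (2 * R) < 1 - ray_gauge D 0 p"
    using hilbert_ball_gauge_bound(2)[OF p] by (simp add: divide_less_eq mult.commute)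
  moreover have "exp (- 2 * R) = 1 / exp (2 * R)" by (simp add: exp_minus inverse_eq_divide)
  moreover have "norm p \<le> ray_gauge D 0 p" by (rule norm_le_gauge_origin)
  ultimately show "p \<in> ball 0 (1 - exp (- 2 * R))" by simp
qed

lemma hilbert_density_bound:
  assumes p: "p \<in> hilbert_ball D 0 R"
  shows "omega_vol TYPE('a) / measure lebesgue (finsler_ball D p)
         \<le> omega_vol TYPE('a) * exp (2 * R) ^ DIM('a) / measure lebesgue (finsler_ball D 0)"
proof -
  define E where "E = exp (2 * R)"
  define c where "c = 1 - ray_gauge D 0 p"
  define M0 where "M0 = measure lebesgue (finsler_ball D 0)"
  define Mp where "Mp = measure lebesgue (finsler_ball D p)"
  have pD: "p \<in> D" and Ec: "E * c > 1"
    using hilbert_ball_gauge_bound[OF p] by (auto simp: E_def c_def)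
  have M0: "M0 > 0" unfolding M0_def by (rule finsler_ball_center_measure_pos)
  have key: "M0 \<le> E ^ DIM('a) * Mp"
  proof -
    have "M0 \<le> (E * c) ^ DIM('a) * M0"
      using one_le_power[of "E * c" "DIM('a)"] Ec M0 by simp
    also have "\<dots> = E ^ DIM('a) * (c ^ DIM('a) * M0)" by (simp add: power_mult_distrib)
    also have "\<dots> \<le> E ^ DIM('a) * Mp"
      using finsler_ball_measure_ge[OF pD] by (intro mult_left_mono) (auto simp: E_def c_def M0_def Mp_def)
    finally show ?thesis .
  qed
  have om: "omega_vol TYPE('a) \<ge> 0" by (simp add: omega_vol_def)
  have "omega_vol TYPE('a) / Mp = omega_vol TYPE('a) * E ^ DIM('a) / (E ^ DIM('a) * Mp)"
    by (simp add: E_def)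
  also have "\<dots> \<le> omega_vol TYPE('a) * E ^ DIM('a) / M0"
    using key M0 om by (intro divide_left_mono) (auto simp: E_def)
  finally show ?thesis by (simp add: E_def M0_def Mp_def)
qed

end

definition pos_cone :: "'a::real_vector \<Rightarrow> 'a \<Rightarrow> 'a set" where
  "pos_cone u w = {\<alpha> *\<^sub>R u + \<beta> *\<^sub>R w | \<alpha> \<beta>. \<alpha> \<ge> 0 \<and> \<beta> \<ge> 0}"

lemma convex_pos_cone: "convex (pos_cone u w)"
  unfolding convex_def
proof (intro ballI allI impI)
  fix x y and s t :: real
  assume x: "x \<in> pos_cone u w" and y: "y \<in> pos_cone u w"
    and s: "0 \<le> s" and t: "0 \<le> t" and "s + t = 1"
  obtain a1 b1 where 1: "x = a1 *\<^sub>R u + b1 *\<^sub>R w" "a1 \<ge> 0" "b1 \<ge> 0"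
    using x by (auto simp: pos_cone_def)
  obtain a2 b2 where 2: "y = a2 *\<^sub>R u + b2 *\<^sub>R w" "a2 \<ge> 0" "b2 \<ge> 0"
    using y by (auto simp: pos_cone_def)
  have "s *\<^sub>R x + t *\<^sub>R y = (s * a1 + t * a2) *\<^sub>R u + (s * b1 + t * b2) *\<^sub>R w"
    by (simp add: 1 2 algebra_simps)
  moreover have "s * a1 + t * a2 \<ge> 0" "s * b1 + t * b2 \<ge> 0" using 1 2 s t by simp_all
  ultimately show "s *\<^sub>R x + t *\<^sub>R y \<in> pos_cone u w"
    unfolding pos_cone_def by blast
qed

lemma sector_subset_pos_cone: "sector 0 A B \<subseteq> pos_cone A B"
  unfolding sector_def
proof (rule hull_minimal)
  show "{0 + t *\<^sub>R (A - 0) |t. 0 \<le> t} \<union> {0 + t *\<^sub>R (B - 0) |t. 0 \<le> t} \<subseteq> pos_cone A B"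
  proof
    fix x assume "x \<in> {0 + t *\<^sub>R (A - 0) |t. 0 \<le> t} \<union> {0 + t *\<^sub>R (B - 0) |t. 0 \<le> t}"
    then obtain t where t: "t \<ge> 0" "x = t *\<^sub>R A + 0 *\<^sub>R B \<or> x = 0 *\<^sub>R A + t *\<^sub>R B" by auto
    then show "x \<in> pos_cone A B" unfolding pos_cone_def by blast
  qed
qed (rule convex_pos_cone)

lemma pos_cone_split:
  assumes AB: "A + B = n *\<^sub>R m" and n: "n \<ge> 0"
  shows "pos_cone A B \<subseteq> pos_cone A m \<union> pos_cone m B"
proof
  fix x assume "x \<in> pos_cone A B"
  then obtain \<alpha> \<beta> where x: "x = \<alpha> *\<^sub>R A + \<beta> *\<^sub>R B" "\<alpha> \<ge> 0" "\<beta> \<ge> 0"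
    by (auto simp: pos_cone_def)
  show "x \<in> pos_cone A m \<union> pos_cone m B"
  proof (cases "\<beta> \<le> \<alpha>")
    case True
    have "x = (\<alpha> - \<beta>) *\<^sub>R A + \<beta> *\<^sub>R (A + B)" by (simp add: x algebra_simps)
    then have "x = (\<alpha> - \<beta>) *\<^sub>R A + (\<beta> * n) *\<^sub>R m" by (simp add: AB)
    then have "x \<in> pos_cone A m"
      unfolding pos_cone_def using True x(3) n by (intro CollectI exI) auto
    then show ?thesis by simp
  next
    case False
    have "x = \<alpha> *\<^sub>R (A + B) + (\<beta> - \<alpha>) *\<^sub>R B" by (simp add: x algebra_simps)
    then have "x = (\<alpha> * n) *\<^sub>R m + (\<beta> - \<alpha>) *\<^sub>R B" by (simp add: AB)
    then have "x \<in> pos_cone m B"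
      unfolding pos_cone_def using False x(2) n by (intro CollectI exI) auto
    then show ?thesis by simp
  qed
qed

definition det2 :: "real^2 \<Rightarrow> real^2 \<Rightarrow> real" where
  "det2 u w = u$1 * w$2 - u$2 * w$1"

lemma inner2: "(u::real^2) \<bullet> w = u$1*w$1 + u$2*w$2"
  by (simp add: inner_vec_def sum_2)

lemma det2_sq:
  fixes u w :: "real^2"
  assumes "norm u = 1" "norm w = 1"
  shows "(det2 u w)\<^sup>2 = 1 - (u \<bullet> w)\<^sup>2"
proof -
  have uu: "u \<bullet> u = 1" "w \<bullet> w = 1" using assms by (simp_all add: power2_norm_eq_inner[symmetric])
  have "(det2 u w)\<^sup>2 + (u \<bullet> w)\<^sup>2 = (u \<bullet> u) * (w \<bullet> w)"
    unfolding det2_def inner2 power2_eq_square by algebra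
  then show ?thesis using uu by simp
qed

text \<open>A unit bisector \<open>m\<close> of two unit vectors (any unit normal when \<open>B = -A\<close>), with the
  half-angle relation \<open>cos(2\<theta>) = 2 cos\<^sup>2 \<theta> - 1\<close>.\<close>
lemma unit_bisector:
  fixes A B :: "real^2"
  assumes nA: "norm A = 1" and nB: "norm B = 1"
  obtains m n where "norm m = 1" "A \<bullet> m \<ge> 0" "B \<bullet> m = A \<bullet> m" "2 * (A \<bullet> m)\<^sup>2 - 1 = A \<bullet> B"
    "A + B = n *\<^sub>R m" "n \<ge> 0"
proof (cases "A + B = 0")
  case False
  define n where "n = norm (A + B)"
  have np: "n > 0" using False by (simp add: n_def)
  define m where "m = (1 / n) *\<^sub>R (A + B)"
  have AA: "A \<bullet> A = 1" "B \<bullet> B = 1" using nA nB by (simp_all add: power2_norm_eq_inner[symmetric])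
  have n2: "n\<^sup>2 = 2 * (1 + A \<bullet> B)"
    using AA by (simp add: n_def power2_norm_eq_inner inner_add_left inner_add_right inner_commute)
  have nm: "norm m = 1" using np by (simp add: m_def n_def)
  have Am: "A \<bullet> m = (1 + A \<bullet> B) / n" using AA by (simp add: m_def inner_add_right)
  have Bm: "B \<bullet> m = A \<bullet> m" using AA by (simp add: m_def inner_add_right inner_commute add.commute)
  have cpos: "1 + A \<bullet> B > 0" using n2 np by (smt (verit, best) zero_less_power)
  have Am0: "A \<bullet> m \<ge> 0" using cpos np Am by simp
  have dbl: "2 * (A \<bullet> m)\<^sup>2 - 1 = A \<bullet> B"
  proof -
    have "2 * (A \<bullet> m)\<^sup>2 = 2 * (1 + A \<bullet> B)\<^sup>2 / n\<^sup>2" by (simp add: Am power_divide)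
    also have "\<dots> = 2 * (1 + A \<bullet> B)\<^sup>2 / (2 * (1 + A \<bullet> B))" by (simp only: n2)
    also have "\<dots> = 1 + A \<bullet> B" using cpos by (simp add: power2_eq_square field_simps)
    finally show ?thesis by simp
  qed
  have AB: "A + B = n *\<^sub>R m" using np by (simp add: m_def)
  show ?thesis by (rule that[OF nm Am0 Bm dbl AB]) (use np in simp)
next
  case True
  then have B: "B = - A" by (simp add: eq_neg_iff_add_eq_0 add.commute)
  define m :: "real^2" where "m = (\<chi> i. if i = 1 then - (A$2) else A$1)"
  have m1: "m$1 = - (A$2)" "m$2 = A$1" by (simp_all add: m_def)
  have AA: "A \<bullet> A = 1" using nA by (simp add: power2_norm_eq_inner[symmetric])
  have "m \<bullet> m = A \<bullet> A" by (simp add: inner2 m1 algebra_simps)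
  then have nm: "norm m = 1" using AA by (simp add: norm_eq_sqrt_inner)
  have Am: "A \<bullet> m = 0" by (simp add: inner2 m1 algebra_simps)
  show ?thesis
    by (rule that[OF nm, of 0]) (use Am AA True in \<open>simp_all add: B\<close>)
qed

text \<open>The isosceles triangle with apex \<open>0\<close> and legs along the unit vectors \<open>u, w\<close> whose base
  is tangent to the circle of radius \<open>\<rho>\<close> (the base is at distance \<open>\<rho>\<close> from \<open>0\<close>).\<close>
definition cone_triangle :: "real \<Rightarrow> real^2 \<Rightarrow> real^2 \<Rightarrow> (real^2) set" where
  "cone_triangle \<rho> u w = convex hull {0, (\<rho> * sqrt (2 + 2 * (u \<bullet> w)) / (1 + u \<bullet> w)) *\<^sub>R u,
                                         (\<rho> * sqrt (2 + 2 * (u \<bullet> w)) / (1 + u \<bullet> w)) *\<^sub>R w}"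

lemma compact_cone_triangle: "compact (cone_triangle \<rho> u w)"
  unfolding cone_triangle_def by (intro finite_imp_compact_convex_hull) auto

text \<open>For an acute angle the triangle covers the part of the cone inside the disc of radius
  \<open>\<rho>\<close>: projecting onto the bisector \<open>u + w\<close> bounds the barycentric coordinates.\<close>
lemma pos_cone_ball_subset_triangle:
  fixes u w :: "real^2"
  assumes nu: "norm u = 1" and nw: "norm w = 1" and c: "u \<bullet> w \<ge> 0"
  shows "pos_cone u w \<inter> ball 0 \<rho> \<subseteq> cone_triangle \<rho> u w"
proof
  fix x assume "x \<in> pos_cone u w \<inter> ball 0 \<rho>"
  then obtain \<alpha> \<beta> where x: "x = \<alpha> *\<^sub>R u + \<beta> *\<^sub>R w" and ab: "\<alpha> \<ge> 0" "\<beta> \<ge> 0"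
    and nx: "norm x < \<rho>" by (auto simp: pos_cone_def)
  define c1 where "c1 = u \<bullet> w"
  define L where "L = \<rho> * sqrt (2 + 2 * c1) / (1 + c1)"
  have uu: "u \<bullet> u = 1" "w \<bullet> w = 1" using nu nw by (simp_all add: power2_norm_eq_inner[symmetric])
  have c1: "c1 \<ge> 0" using c by (simp add: c1_def)
  have xi: "x \<bullet> (u + w) = (\<alpha> + \<beta>) * (1 + c1)"
    using uu by (simp add: x c1_def inner_add_left inner_add_right inner_commute algebra_simps)
  have nuw: "norm (u + w) = sqrt (2 + 2 * c1)"
    using uu by (simp add: norm_eq_sqrt_inner c1_def inner_add_left inner_add_right inner_commute)
  have sq: "sqrt (2 + 2 * c1) > 0" using c1 by simp
  have "x \<bullet> (u + w) \<le> norm x * norm (u + w)" by (rule norm_cauchy_schwarz)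
  also have "\<dots> < \<rho> * sqrt (2 + 2 * c1)" using nx sq nuw by simp
  finally have "(\<alpha> + \<beta>) * (1 + c1) < \<rho> * sqrt (2 + 2 * c1)" using xi by simp
  then have lt: "\<alpha> + \<beta> < L" using c1 by (simp add: L_def pos_less_divide_eq)
  have Lp: "L > 0" using ab lt by linarith
  have "x = (1 - (\<alpha> + \<beta>) / L) *\<^sub>R 0 + (\<alpha> / L) *\<^sub>R (L *\<^sub>R u) + (\<beta> / L) *\<^sub>R (L *\<^sub>R w)"
    using Lp by (simp add: x)
  moreover have "0 \<le> 1 - (\<alpha> + \<beta>) / L" using lt Lp by simp
  moreover have "0 \<le> \<alpha> / L" "0 \<le> \<beta> / L" using ab Lp by simp_all
  moreover have "(1 - (\<alpha> + \<beta>) / L) + \<alpha> / L + \<beta> / L = 1" using Lp by (simp add: field_simps)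
  ultimately have "x \<in> convex hull {0, L *\<^sub>R u, L *\<^sub>R w}"
    unfolding convex_hull_3 by blast
  then show "x \<in> cone_triangle \<rho> u w" by (simp add: cone_triangle_def L_def c1_def)
qed

text \<open>Its area: legs of length \<open>L\<close> with \<open>L\<^sup>2 = 2 \<rho>\<^sup>2 / (1 + cos)\<close>, so area \<open>\<rho>\<^sup>2 sin / (1 + cos)\<close>.\<close>
lemma measure_cone_triangle:
  fixes u w :: "real^2"
  assumes c: "u \<bullet> w \<ge> 0"
  shows "measure lebesgue (cone_triangle \<rho> u w) = \<rho>\<^sup>2 * \<bar>det2 u w\<bar> / (1 + u \<bullet> w)"
proof -
  define c1 where "c1 = u \<bullet> w"
  define L where "L = \<rho> * sqrt (2 + 2 * c1) / (1 + c1)"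
  have c1: "c1 \<ge> 0" using c by (simp add: c1_def)
  have T: "cone_triangle \<rho> u w = convex hull {0, L *\<^sub>R u, L *\<^sub>R w}"
    by (simp add: cone_triangle_def L_def c1_def)
  have "convex hull {0, L *\<^sub>R u, L *\<^sub>R w} \<in> sets borel"
    using compact_cone_triangle[of \<rho> u w] by (intro borel_closed compact_imp_closed) (simp add: T)
  then have "measure lebesgue (convex hull {0, L *\<^sub>R u, L *\<^sub>R w})
      = measure lborel (convex hull {0, L *\<^sub>R u, L *\<^sub>R w})" by simp
  also have "\<dots> = \<bar>(L * w $ 1 - 0) * (L * u $ 2 - 0) - (L * u $ 1 - 0) * (L * w $ 2 - 0)\<bar> / 2"
    using content_triangle[of 0 "L *\<^sub>R u" "L *\<^sub>R w"] by simp
  also have "\<dots> = L\<^sup>2 * \<bar>det2 u w\<bar> / 2"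
  proof -
    have "(L * w $ 1 - 0) * (L * u $ 2 - 0) - (L * u $ 1 - 0) * (L * w $ 2 - 0) = - (L\<^sup>2 * det2 u w)"
      by (simp add: det2_def power2_eq_square algebra_simps)
    then show ?thesis by (simp add: abs_mult)
  qed
  also have "L\<^sup>2 = \<rho>\<^sup>2 * 2 / (1 + c1)"
  proof -
    have "L\<^sup>2 = \<rho>\<^sup>2 * (sqrt (2 + 2 * c1))\<^sup>2 / (1 + c1)\<^sup>2"
      by (simp add: L_def power_divide power_mult_distrib)
    also have "(sqrt (2 + 2 * c1))\<^sup>2 = 2 * (1 + c1)" using c1 by simp
    finally have "L\<^sup>2 = (\<rho>\<^sup>2 * 2) * (1 + c1) / ((1 + c1) * (1 + c1))"
      by (simp add: power2_eq_square mult.assoc)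
    also have "\<dots> = (\<rho>\<^sup>2 * 2) / (1 + c1)"
      using c1 by (intro nonzero_mult_divide_mult_cancel_right) simp
    finally show ?thesis .
  qed
  finally show ?thesis using c1 by (simp add: T c1_def field_simps)
qed

lemma arccos_double:
  assumes "0 \<le> c" "c \<le> 1"
  shows "arccos (2 * c\<^sup>2 - 1) = 2 * arccos c"
proof -
  define x where "x = arccos c"
  have x: "0 \<le> x" "x \<le> pi / 2"
    using assms arccos_lbound[of c] arccos_le_pi2[of c] by (simp_all add: x_def)
  have "cos (2 * x) = 2 * c\<^sup>2 - 1" using assms by (simp add: x_def cos_double_cos)
  then show ?thesis using x arccos_cos[of "2 * x"] by (simp add: x_def)
qed

lemma one_minus_le_arccos_sq:
  assumes "-1 \<le> c" "c \<le> 1"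
  shows "1 - c \<le> (arccos c)\<^sup>2 / 2"
proof -
  define x where "x = arccos c"
  have "cos (2 * (x / 2)) = 1 - 2 * sin (x / 2) ^ 2" by (rule cos_double_sin)
  then have "1 - c = 2 * sin (x / 2) ^ 2" using assms by (simp add: x_def)
  also have "sin (x / 2) ^ 2 \<le> (x / 2) ^ 2"
    using abs_sin_x_le_abs_x[of "x/2"] by (metis abs_le_square_iff)
  finally show ?thesis by (simp add: x_def power_divide)
qed

text \<open>\<open>tan (x/2) \<le> x / sqrt 2\<close> for \<open>x \<in> [0, pi/2]\<close>, written in terms of \<open>c = cos x\<close>.\<close>
lemma half_angle_tangent_le:
  assumes c: "0 \<le> c" "c \<le> 1"
  shows "sqrt (1 - c\<^sup>2) / (1 + c) \<le> arccos c / sqrt 2"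
proof (rule power2_le_imp_le)
  have "1 - c\<^sup>2 \<ge> 0" using c by (simp add: power_le_one)
  then have "(sqrt (1 - c\<^sup>2) / (1 + c))\<^sup>2 = (1 - c\<^sup>2) / (1 + c)\<^sup>2" by (simp add: power_divide)
  also have "\<dots> = ((1 - c) * (1 + c)) / ((1 + c) * (1 + c))" by (simp add: power2_eq_square algebra_simps)
  also have "\<dots> = (1 - c) / (1 + c)" using c by (intro nonzero_mult_divide_mult_cancel_right) simp
  also have "\<dots> \<le> 1 - c" using c by (simp add: divide_le_eq mult_le_cancel_left1)
  also have "\<dots> \<le> (arccos c)\<^sup>2 / 2" using c by (intro one_minus_le_arccos_sq) auto
  also have "\<dots> = (arccos c / sqrt 2)\<^sup>2" by (simp add: power_divide)
  finally show "(sqrt (1 - c\<^sup>2) / (1 + c))\<^sup>2 \<le> (arccos c / sqrt 2)\<^sup>2" .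
  show "0 \<le> arccos c / sqrt 2" using c arccos_lbound[of c] by simp
qed

text \<open>The part of the disc of radius \<open>\<rho>\<close> inside the sector \<open>A0B\<close> is covered by the two
  triangles on either side of the bisector, of total area \<open>\<le> sqrt 2 \<rho>\<^sup>2 \<cdot> angle(A0B)/2\<close>.\<close>
lemma sector_ball_cover:
  fixes A B :: "real^2"
  assumes nA: "norm A = 1" and nB: "norm B = 1"
  obtains T where "T \<in> lmeasurable" "ball 0 \<rho> \<inter> sector 0 A B \<subseteq> T"
    "measure lebesgue T \<le> sqrt 2 * \<rho>\<^sup>2 * (arccos (A \<bullet> B) / 2)"
proof -
  obtain m n where nm: "norm m = 1" and Am: "A \<bullet> m \<ge> 0" "B \<bullet> m = A \<bullet> m"
    and dbl: "2 * (A \<bullet> m)\<^sup>2 - 1 = A \<bullet> B" and AB: "A + B = n *\<^sub>R m" "n \<ge> 0"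
    using unit_bisector[OF nA nB] by blast
  define c where "c = A \<bullet> m"
  have c: "0 \<le> c" "c \<le> 1"
    using Am Cauchy_Schwarz_ineq2[of A m] nA nm by (auto simp: c_def)
  have mB: "m \<bullet> B = c" using Am by (simp add: c_def inner_commute)
  define T where "T = cone_triangle \<rho> A m \<union> cone_triangle \<rho> m B"
  have cover: "ball 0 \<rho> \<inter> sector 0 A B \<subseteq> T"
    using sector_subset_pos_cone[of A B] pos_cone_split[OF AB]
      pos_cone_ball_subset_triangle[OF nA nm Am(1), of \<rho>]
      pos_cone_ball_subset_triangle[OF nm nB, of \<rho>] mB c
    by (auto simp: T_def)
  have sin: "\<bar>det2 A m\<bar> = sqrt (1 - c\<^sup>2)" "\<bar>det2 m B\<bar> = sqrt (1 - c\<^sup>2)"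
    using det2_sq[OF nA nm] det2_sq[OF nm nB] mB
    by (simp_all add: c_def flip: real_sqrt_abs)
  have half: "\<rho>\<^sup>2 * sqrt (1 - c\<^sup>2) / (1 + c) \<le> \<rho>\<^sup>2 * (arccos c / sqrt 2)"
    using mult_left_mono[OF half_angle_tangent_le[OF c], of "\<rho>\<^sup>2"] by simp
  have "measure lebesgue T \<le> measure lebesgue (cone_triangle \<rho> A m) + measure lebesgue (cone_triangle \<rho> m B)"
    unfolding T_def by (intro measure_Un_le fmeasurableD lmeasurable_compact compact_cone_triangle)
  also have "\<dots> \<le> 2 * (\<rho>\<^sup>2 * (arccos c / sqrt 2))"
    using half Am(1) mB c by (simp add: measure_cone_triangle sin c_def)
  also have "\<dots> = sqrt 2 * \<rho>\<^sup>2 * arccos c"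
    by (simp add: field_simps real_div_sqrt)
  also have "arccos c = arccos (A \<bullet> B) / 2" using arccos_double[OF c] dbl by (simp add: c_def)
  finally have "measure lebesgue T \<le> sqrt 2 * \<rho>\<^sup>2 * (arccos (A \<bullet> B) / 2)" .
  moreover have "T \<in> lmeasurable"
    unfolding T_def by (intro lmeasurable_compact compact_Un compact_cone_triangle)
  ultimately show ?thesis using that cover by blast
qed

lemma exp2_bound: "exp (2::real) < 7.4"
proof -
  have "exp (2::real) = exp 1 * exp 1" by (simp add: exp_add[symmetric])
  also have "\<dots> < 2.72 * 2.72" using e_less_272 by (intro mult_strict_mono) auto
  finally show ?thesis by simp
qed

lemma omega_vol_plane: "omega_vol TYPE(real^2) = pi"
  using circle_area[of 1 "0::real^2"] by (simp add: omega_vol_def)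

text \<open>The numerical heart of the final comparison: with \<open>\<rho> = 1 - 1/E\<close> one has \<open>\<rho> \<le> E/4\<close>,
  and \<open>sqrt 2 \<cdot> (E/4)\<^sup>2 \<cdot> ((e\<^sup>2 - 1)/2)\<^sup>2 \<le> E\<^sup>2\<close> because \<open>e\<^sup>2 < 7.4\<close>.\<close>
lemma radius_constant_bound:
  fixes E \<rho> :: real
  assumes E: "E > 1" and rho: "\<rho> = 1 - 1 / E"
  shows "sqrt 2 * \<rho>\<^sup>2 * ((exp 2 - 1) / 2)\<^sup>2 \<le> E\<^sup>2"
proof -
  define k where "k = (exp 2 - 1) / (2::real)"
  have k: "0 < k" "k < 3.2" using exp_gt_one[of 2] exp2_bound by (simp_all add: k_def)
  have "k * k \<le> 3.2 * 3.2" using k by (intro mult_mono) auto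
  then have k2: "k\<^sup>2 \<le> 10.24" by (simp add: power2_eq_square)
  have r0: "\<rho> \<ge> 0" using E by (simp add: rho)
  have rE: "\<rho> \<le> E / 4"
  proof -
    have "(E - 2)\<^sup>2 \<ge> 0" by simp
    then have "4 * (E - 1) \<le> E * E" by (simp add: power2_eq_square algebra_simps)
    then show ?thesis using E by (simp add: rho field_simps)
  qed
  have r2: "\<rho>\<^sup>2 \<le> E\<^sup>2 / 16"
    using power_mono[OF rE r0, of 2] by (simp add: power_divide)
  have s2: "sqrt 2 \<le> (1.5::real)" by (rule real_le_lsqrt) (auto simp: power2_eq_square)
  have "sqrt 2 * \<rho>\<^sup>2 * k\<^sup>2 \<le> 1.5 * (E\<^sup>2 / 16) * 10.24"
    using s2 r2 k2 by (intro mult_mono) (auto intro: mult_nonneg_nonneg)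
  also have "\<dots> \<le> E\<^sup>2" by simp
  finally show ?thesis by (simp add: k_def)
qed

lemma constant_comparison:
  fixes M0 M1 E \<rho> x V :: real
  assumes M0: "M0 > 0" and M1: "M1 > 0" and M: "M1 \<le> ((exp 2 - 1) / 2)\<^sup>2 * M0"
    and E: "E > 1" and rho: "\<rho> = 1 - 1 / E" and V: "0 \<le> V" "V \<le> sqrt 2 * \<rho>\<^sup>2 * x"
  shows "pi * E\<^sup>2 / M0 * V \<le> pi * E ^ 4 / M1 * x"
proof -
  define k where "k = (exp 2 - 1) / (2::real)"
  have "\<rho> > 0" using E by (simp add: rho)
  then have c: "sqrt 2 * \<rho>\<^sup>2 > 0" by simp
  have "0 \<le> sqrt 2 * \<rho>\<^sup>2 * x" using V by linarith
  then have x: "x \<ge> 0" using c by (simp add: zero_le_mult_iff)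
  have Vx: "E\<^sup>2 * V \<le> E\<^sup>2 * (sqrt 2 * \<rho>\<^sup>2 * x)" using V(2) by (simp add: mult_left_mono)
  have "E\<^sup>2 * V * M1 \<le> E\<^sup>2 * (sqrt 2 * \<rho>\<^sup>2 * x) * (k\<^sup>2 * M0)"
    by (rule mult_mono[OF Vx M[folded k_def]]) (use V x M1 c in auto)
  also have "\<dots> = E\<^sup>2 * (sqrt 2 * \<rho>\<^sup>2 * k\<^sup>2) * x * M0" by (simp add: algebra_simps)
  also have "\<dots> \<le> E\<^sup>2 * E\<^sup>2 * x * M0"
    using radius_constant_bound[OF E rho] x M0 by (intro mult_right_mono mult_left_mono) (auto simp: k_def)
  finally have "E\<^sup>2 * V * M1 \<le> E ^ 4 * x * M0"
    by (simp add: power2_eq_square power4_eq_xxxx)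
  then show ?thesis using M0 M1 by (simp add: field_simps)
qed

theorem lemma2p6:
  fixes C :: "(real^2) set" and A B :: "real^2" and R :: real
  assumes "open C" and "bounded C" and "convex C" and "C \<noteq> {}"
    and "0 \<in> C" and "C \<subseteq> ball 0 1"
    and "norm A = 1" and "norm B = 1" and "A \<noteq> B"
    and "R > 0"
  shows "hilbert_measure C (hilbert_ball C 0 R \<inter> sector 0 A B)
           \<le> ennreal (pi * exp (8 * R) / measure lebesgue (hilbert_ball C 0 1)
                      * (arccos (A \<bullet> B) / 2))"
proof -
  interpret centered_domain C by unfold_locales (use assms in auto)
  define E where "E = exp (2 * R)"
  define \<rho> where "\<rho> = 1 - exp (- 2 * R)"
  define M0 where "M0 = measure lebesgue (finsler_ball C 0)"
  define M1 where "M1 = measure lebesgue (hilbert_ball C 0 1)"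
  define X where "X = hilbert_ball C 0 R \<inter> sector 0 A B"
  have E: "E > 1" "\<rho> = 1 - 1 / E" using assms(10) by (simp_all add: E_def \<rho>_def exp_minus inverse_eq_divide)
  have M0: "M0 > 0" unfolding M0_def by (rule finsler_ball_center_measure_pos)
  have M1: "M1 > 0" unfolding M1_def by (rule hilbert_unit_ball_measure_pos)
  have M1le: "M1 \<le> ((exp 2 - 1) / 2)\<^sup>2 * M0"
    using hilbert_unit_ball_measure_le by (simp add: M0_def M1_def)
  obtain T where T: "T \<in> lmeasurable" "ball 0 \<rho> \<inter> sector 0 A B \<subseteq> T"
    and area: "measure lebesgue T \<le> sqrt 2 * \<rho>\<^sup>2 * (arccos (A \<bullet> B) / 2)"
    using sector_ball_cover[OF assms(7,8)] by blast
  have XT: "X \<subseteq> T" using hilbert_ball_subset_ball T(2) by (auto simp: X_def \<rho>_def)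
  have dens: "omega_vol TYPE(real^2) / measure lebesgue (finsler_ball C p) \<le> pi * E\<^sup>2 / M0"
    if "p \<in> X" for p
    using hilbert_density_bound[of p R] that by (simp add: X_def E_def M0_def omega_vol_plane)
  have "hilbert_measure C X \<le> ennreal (pi * E\<^sup>2 / M0 * measure lebesgue T)"
    using M0 by (intro hilbert_measure_le_uniform[OF T(1) XT _ dens]) auto
  also have "\<dots> \<le> ennreal (pi * E ^ 4 / M1 * (arccos (A \<bullet> B) / 2))"
    using constant_comparison[OF M0 M1 M1le E _ area] by (intro ennreal_leI) simp
  also have "E ^ 4 = exp (8 * R)" by (simp add: E_def flip: exp_of_nat_mult)
  finally show ?thesis by (simp add: X_def M1_def)
qed

end
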